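(* Let $W=L^a(RL)^{k_1}R(RL)^{k_2}R\cdots(RL)^{k_m}RL^b$ be a balanced word, where $a,b,m\ge 0$ are integers with $a+b=m$ and $k_i\ge 0$ for $1\le i\le m$. Then the elevation multiset of $W$ is the multiset union $$E(W)=\{0,-1,\dots,-a\}\cup\{0,1,\dots,b\}\cup\{(i-a)^{\mu_i}\}_{i=0}^m,$$ where the value $i-a$ appears with multiplicity $\mu_i$ in the last part, with $\mu_0=k_1$, $\mu_i=k_i+1+k_{i+1}$ for $1\le i\le m-1$, and $\mu_m=k_m$.
   Context: Words are finite products of the letters $L,R$. A word is balanced if it contains equally many $L$'s and $R$'s. For a balanced word $W=a_1\cdots a_n$ and $0\le k\le n$, $e_k(W)=\sum_{i=1}^k\overline{a_i}$ with $\overline{R}=1$, $\overline{L}=-1$; the elevation multiset $E(W)$ is the multiset $\{e_0(W),\dots,e_n(W)\}$. The notation $x^\mu$ denotes the value $x$ with multiplicity $\mu$, and $\cup$ denotes multiset union (multiplicities add). *)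

theory Defs
  imports Main "HOL-Library.Multiset"
begin

datatype letter = L | R

type_synonym word = "letter list"

definition letter_val :: "letter \<Rightarrow> int" where
  "letter_val a = (case a of R \<Rightarrow> 1 | L \<Rightarrow> -1)"

definition balanced :: "word \<Rightarrow> bool" where
  "balanced W \<longleftrightarrow> count_list W L = count_list W R"

definition elev :: "nat \<Rightarrow> word \<Rightarrow> int" where
  "elev k W = (\<Sum>i<k. letter_val (W ! i))"

definition elev_mset :: "word \<Rightarrow> int multiset" where
  "elev_mset W = mset (map (\<lambda>k. elev k W) [0..<length W + 1])"

end

theory Submission
  imports Defs
begin

text \<open>
  Read W as a lattice path starting at height 0. The prefix L^a descends to -a and the
  suffix L^b descends from b to 0, contributing {0,-1,...,-a} and {0,1,...,b}. The i-th
  block (RL)^k_i R starts at height i-1-a and oscillates k_i times between i-a and i-1-a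
  before its final R lifts it to i-a. So height i-a is visited k_i times by block i,
  k_(i+1) times by block i+1 (when these blocks exist), and once at the end of block i
  for 0 < i < m; the end of block m is the visit of b already counted in {0,...,b}.
\<close>

definition rise :: "word \<Rightarrow> int" where
  "rise w = sum_list (map letter_val w)"

lemma rise_Nil [simp]: "rise [] = 0"
  and rise_Cons [simp]: "rise (x # w) = letter_val x + rise w"
  and rise_append [simp]: "rise (u @ v) = rise u + rise v"
  by (simp_all add: rise_def)

fun step_heights :: "int \<Rightarrow> word \<Rightarrow> int multiset" where
  "step_heights s [] = {#}"
| "step_heights s (x # w) = {#s + letter_val x#} + step_heights (s + letter_val x) w"

lemma step_heights_append:
  "step_heights s (u @ v) = step_heights s u + step_heights (s + rise u) v"
  by (induction u arbitrary: s) (simp_all add: add.assoc)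

lemma elev_eq_rise_take: "k \<le> length W \<Longrightarrow> elev k W = rise (take k W)"
proof (induction k)
  case 0
  then show ?case by (simp add: elev_def)
next
  case (Suc k)
  then have "take (Suc k) W = take k W @ [W ! k]"
    by (simp add: take_Suc_conv_app_nth)
  with Suc show ?case by (simp add: elev_def)
qed

lemma mset_rise_take:
  "mset (map (\<lambda>k. s + rise (take k w)) [0..<length w + 1]) = {#s#} + step_heights s w"
proof (induction w arbitrary: s)
  case Nil
  then show ?case by simp
next
  case (Cons x w)
  have "[0..<length (x # w) + 1] = 0 # map Suc [0..<length w + 1]"
    by (simp add: upt_conv_Cons map_Suc_upt del: upt_Suc)
  then have "mset (map (\<lambda>k. s + rise (take k (x # w))) [0..<length (x # w) + 1])
      = add_mset s (mset (map (\<lambda>k. (s + letter_val x) + rise (take k w)) [0..<length w + 1]))"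
    by (simp only: list.map mset.simps map_map comp_def take_Suc_Cons rise_Cons take0 rise_Nil
        add_0_right add.assoc)
  with Cons show ?case
    by simp
qed

lemma elev_mset_eq_step_heights: "elev_mset W = {#0#} + step_heights 0 W"
proof -
  have "elev_mset W = mset (map (\<lambda>k. 0 + rise (take k W)) [0..<length W + 1])"
    unfolding elev_mset_def
    by (intro arg_cong[where f = mset] map_cong) (auto simp: elev_eq_rise_take)
  then show ?thesis
    by (simp only: mset_rise_take)
qed

lemma rise_replicate_L: "rise (replicate a L) = - int a"
  by (induction a) (simp_all add: letter_val_def)

lemma step_heights_replicate_L:
  "step_heights s (replicate a L) = mset (map (\<lambda>j. s - int j) [1..<a + 1])"
proof (induction a)
  case 0
  then show ?case by simp
next
  case (Suc a)
  have "step_heights s (replicate (Suc a) L) = step_heights s (replicate a L @ [L])"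
    by (simp only: replicate_append_same replicate_Suc)
  also have "\<dots> = step_heights s (replicate a L) + {#s - int (Suc a)#}"
    by (simp add: step_heights_append rise_replicate_L letter_val_def)
  finally show ?case
    using Suc.IH by simp
qed

lemma rise_zigzag: "rise (concat (replicate n [R, L])) = 0"
  by (induction n) (simp_all add: letter_val_def)

lemma step_heights_zigzag:
  "step_heights s (concat (replicate n [R, L])) = replicate_mset n (s + 1) + replicate_mset n s"
  by (induction n) (simp_all add: letter_val_def)

lemma replicate_mset_add: "replicate_mset (m + n) x = replicate_mset m x + replicate_mset n x"
  by (induction m) simp_all

definition block :: "nat \<Rightarrow> word" where
  "block n = concat (replicate n [R, L]) @ [R]"

lemma rise_block: "rise (block n) = 1"
  and step_heights_block:
    "step_heights s (block n) = replicate_mset n (s + 1) + replicate_mset n s + {#s + 1#}"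
  by (simp_all add: block_def step_heights_append step_heights_zigzag rise_zigzag letter_val_def)

lemma rise_blocks: "rise (concat (map (\<lambda>i. block (k i)) [1..<m + 1])) = int m"
  by (induction m) (simp_all add: rise_block)

lemma step_heights_blocks:
  "step_heights s (concat (map (\<lambda>i. block (k i)) [1..<m + 1])) =
     (\<Sum>i\<in>{1..m}. replicate_mset (k i) (s + int i) + replicate_mset (k i) (s + int i - 1)
                    + {#s + int i#})"
proof (induction m)
  case 0
  then show ?case by simp
next
  case (Suc m)
  then show ?case
    using rise_blocks[of k m] by (simp add: step_heights_append step_heights_block add_ac)
qed

lemma block_heights_regroup:
  assumes "m \<ge> 1"
  shows "(\<Sum>i\<in>{1..m}. replicate_mset (k i) (s + int i) + replicate_mset (k i) (s + int i - 1)
                        + {#s + int i#})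
       = (\<Sum>i\<in>{0..m}. replicate_mset
            (if i = 0 then k 1 else if i = m then k m else k i + 1 + k (i + 1)) (s + int i))
         + {#s + int m#}"
  using assms
proof (induction m rule: nat_induct_at_least)
  case base
  then show ?case by (simp add: add_ac)
next
  case (Suc m)
  let ?\<mu> = "\<lambda>m i. if i = 0 then k 1 else if i = m then k m else k i + 1 + k (i + 1)"
  let ?below = "\<Sum>i\<in>{0..<m}. replicate_mset (?\<mu> m i) (s + int i)"
  have "(\<Sum>i\<in>{0..<m}. replicate_mset (?\<mu> (Suc m) i) (s + int i)) = ?below"
    by (rule sum.cong) auto
  then have levels_Suc: "(\<Sum>i\<in>{0..Suc m}. replicate_mset (?\<mu> (Suc m) i) (s + int i))
      = ?below + replicate_mset (k m + 1 + k (Suc m)) (s + int m)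
        + replicate_mset (k (Suc m)) (s + int (Suc m))"
    using Suc.hyps by (simp add: atLeastLessThanSuc_atLeastAtMost[symmetric])
  have levels: "(\<Sum>i\<in>{0..m}. replicate_mset (?\<mu> m i) (s + int i))
      = ?below + replicate_mset (k m) (s + int m)"
    using Suc.hyps by (simp add: atLeastLessThanSuc_atLeastAtMost[symmetric])
  show ?case
    unfolding levels_Suc unfolding sum.cl_ivl_Suc Suc.IH levels
    by (simp add: replicate_mset_add add_ac)
qed

lemma mset_countdown: "mset (map (\<lambda>j. int b - int j) [1..<b + 1]) = mset (map int [0..<b])"
proof (induction b)
  case 0
  then show ?case by simp
next
  case (Suc b)
  have "[1..<Suc b + 1] = 1 # map Suc [1..<b + 1]"
    by (simp add: upt_conv_Cons map_Suc_upt del: upt_Suc)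
  then have "mset (map (\<lambda>j. int (Suc b) - int j) [1..<Suc b + 1])
      = {#int b#} + mset (map (\<lambda>j. int b - int j) [1..<b + 1])"
    by (simp add: comp_def del: upt_Suc)
  with Suc show ?case
    by simp
qed

theorem lemma6p5:
  fixes a b m :: nat and k :: "nat \<Rightarrow> nat"
  assumes "m \<ge> 1" and "a + b = m"
    and "W = replicate a L
             @ concat (map (\<lambda>i. concat (replicate (k i) [R, L]) @ [R]) [1..<m+1])
             @ replicate b L"
    and "balanced W"
  shows "elev_mset W =
           mset (map (\<lambda>j. - int j) [0..<a+1])
         + mset (map int [0..<b+1])
         + (\<Sum>i\<in>{0..m}. replicate_mset
               (if i = 0 then k 1 else if i = m then k m else k i + 1 + k (i+1))
               (int i - int a))"
proof -
  have W: "W = replicate a L @ concat (map (\<lambda>i. block (k i)) [1..<m + 1]) @ replicate b L"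
    using assms(3) by (simp add: block_def)
  have m_eq: "int m = int a + int b"
    using assms(2) by simp
  have "elev_mset W = {#0#} + mset (map (\<lambda>j. - int j) [1..<a + 1])
      + (\<Sum>i\<in>{0..m}. replicate_mset
           (if i = 0 then k 1 else if i = m then k m else k i + 1 + k (i + 1)) (- int a + int i))
      + {#int b#} + mset (map (\<lambda>j. int b - int j) [1..<b + 1])"
    unfolding elev_mset_eq_step_heights W step_heights_append step_heights_replicate_L
      rise_replicate_L step_heights_blocks rise_blocks block_heights_regroup[OF assms(1)]
    using m_eq by (simp add: add_ac)
  moreover have "mset (map (\<lambda>j. - int j) [0..<a + 1]) = {#0#} + mset (map (\<lambda>j. - int j) [1..<a + 1])"
    by (simp add: upt_conv_Cons del: upt_Suc)
  moreover have "mset (map int [0..<b + 1]) = {#int b#} + mset (map int [0..<b])"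
    by simp
  ultimately show ?thesis
    unfolding mset_countdown by (simp add: add_ac)
qed

end
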